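(* Let $n\ge1$, $K=\mathbb{R}^n_+$, and $\bar x\in K\cap\mathbb{Z}^n\setminus\{0\}$. Then $$Q(\bar x)=\Big\{x\in\mathbb{R}^n:\ x_i\ge0\ (i=1,\dots,n),\ \ \sum_{i=1}^k d^k_i x_i\ge\sum_{i=1}^k d^k_i\bar x_i\ (k=1,\dots,n)\Big\}.$$
   Context: Lexicographic order: for $x,y\in\mathbb{R}^n$, $x\prec y$ iff $x\ne y$ and $x_i<y_i$ for the smallest index $i$ with $x_i\ne y_i$; $\succeq$ has the obvious meaning. $Q(\bar x):=\operatorname{conv}\{x\in K\cap\mathbb{Z}^n: x\succeq\bar x\}$. For $k\in\{1,\dots,n\}$ and $i\in\{1,\dots,k\}$: $d^k_k=1$; $d^k_{k-1}=\bar x_k$ (if $k\ge2$); and $d^k_i=\bar x_k\prod_{j=i+1}^{k-1}(\bar x_j+1)$ for $i\le k-2$. The inequality $\sum_{i=1}^k d^k_i x_i\ge\sum_{i=1}^k d^k_i\bar x_i$ is called the $k$-th lex-cut associated with $\bar x$. *)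

theory Defs
  imports "HOL-Analysis.Analysis"
begin

text \<open>Vectors of R^n are modelled as real^'n, where the index type 'n is finite and
linearly ordered (isomorphic to {1..n} with its usual order).\<close>

definition lex_less :: "real^'n::{finite,linorder} \<Rightarrow> real^'n::{finite,linorder} \<Rightarrow> bool" where
  "lex_less x y \<longleftrightarrow> x \<noteq> y \<and> (\<exists>i. x$i < y$i \<and> (\<forall>j<i. x$j = y$j))"

definition lex_ge :: "real^'n::{finite,linorder} \<Rightarrow> real^'n::{finite,linorder} \<Rightarrow> bool" where
  "lex_ge x y \<longleftrightarrow> x = y \<or> lex_less y x"

definition nonneg_orthant :: "(real^'n::{finite,linorder}) set" where
  "nonneg_orthant = {x. \<forall>i. 0 \<le> x$i}"

definition is_int_vec :: "real^'n::{finite,linorder} \<Rightarrow> bool" where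
  "is_int_vec x \<longleftrightarrow> (\<forall>i. x$i \<in> \<int>)"

definition Qset :: "(real^'n::{finite,linorder}) set \<Rightarrow> real^'n::{finite,linorder} \<Rightarrow> (real^'n::{finite,linorder}) set" where
  "Qset K xb = convex hull {x \<in> K. is_int_vec x \<and> lex_ge x xb}"

text \<open>Lex-cut coefficients d^k_i (for i \<le> k); d^k_k = 1, otherwise
  xb_k * prod_{i<j<k} (xb_j + 1) (empty product = 1 gives d^k_{k-1} = xb_k).\<close>
definition lexcut_coeff :: "real^'n::{finite,linorder} \<Rightarrow> 'n::{finite,linorder} \<Rightarrow> 'n::{finite,linorder} \<Rightarrow> real" where
  "lexcut_coeff xb k i = (if i = k then 1 else xb$k * (\<Prod>j\<in>{i<..<k}. xb$j + 1))"

end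

theory Submission
  imports Defs
begin

(* Put g_k(x) = 1 + sum_{i<k} (xb_i - x_i) prod_{i<j<k} (xb_j + 1). The k-th lex-cut says
   exactly x_k >= xb_k g_k(x), and g_{k+1} = (xb_k + 1) g_k - x_k.

   An integer point x >=lex xb agrees with xb before its first difference m, where
   x_m >= xb_m + 1; hence g_k(x) = 1 for k <= m and g_k(x) <= 0 for k > m, so x satisfies all
   cuts, and so does every point of Q(xb).
   Conversely, if x >= 0 satisfies the cuts, the clipped values mu_k = max 0 g_k(x) decrease
   from mu_1 = 1, and x dominates the convex combination
   mu_{n+1} xb + sum_k (mu_k - mu_{k+1}) v^k, where the lattice point v^k >lex xb agrees with xb
   before k, equals xb_k + 1 at k and vanishes after k. The lattice points >=lex xb are closed
   under adding nonnegative integer vectors, so Q(xb) is closed under adding nonnegative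
   vectors and contains x. *)

(* One plus the amount by which y falls short of a on the positions D, both read as mixed-radix
   numerals with radices a_j + 1; thus g_k(x) = radix_gap xb x {..<k}. *)
definition radix_gap :: "('n::linorder \<Rightarrow> real) \<Rightarrow> ('n \<Rightarrow> real) \<Rightarrow> 'n set \<Rightarrow> real" where
  "radix_gap a y D = 1 + (\<Sum>i\<in>D. (a i - y i) * (\<Prod>j\<in>{j\<in>D. i < j}. a j + 1))"

lemma radix_gap_empty [simp]: "radix_gap a y {} = 1"
  by (simp add: radix_gap_def)

lemma radix_gap_eq_1: "(\<And>j. j \<in> D \<Longrightarrow> y j = a j) \<Longrightarrow> radix_gap a y D = 1"
  by (simp add: radix_gap_def)

lemma radix_gap_insert_greatest:
  assumes "finite D" and greatest: "\<forall>d\<in>D. d < b"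
  shows "radix_gap a y (insert b D) = (a b + 1) * radix_gap a y D - y b"
proof -
  let ?P = "\<lambda>i D. \<Prod>j\<in>{j\<in>D. i < j}. a j + 1"
  have "b \<notin> D" using greatest by blast
  have "{j \<in> insert b D. b < j} = {}" using greatest by auto
  then have "?P b (insert b D) = 1" by (simp only: prod.empty)
  moreover have "?P i (insert b D) = (a b + 1) * ?P i D" if "i \<in> D" for i
  proof -
    have "{j \<in> insert b D. i < j} = insert b {j\<in>D. i < j}" using that greatest by auto
    then show ?thesis using assms(1) \<open>b \<notin> D\<close> by simp
  qed
  then have "(\<Sum>i\<in>D. (a i - y i) * ?P i (insert b D)) = (a b + 1) * (\<Sum>i\<in>D. (a i - y i) * ?P i D)"
    unfolding sum_distrib_left by (intro sum.cong) simp_all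
  ultimately show ?thesis
    unfolding radix_gap_def sum.insert[OF assms(1) \<open>b \<notin> D\<close>] by (simp add: algebra_simps)
qed

lemma radix_gap_atMost:
  fixes k :: "'n::{finite,linorder}"
  shows "radix_gap a y {..k} = (a k + 1) * radix_gap a y {..<k} - y k"
proof -
  have "{..k} = insert k {..<k}" by auto
  then show ?thesis by (simp add: radix_gap_insert_greatest)
qed

lemma radix_gap_nonpos:
  fixes a y :: "'n::linorder \<Rightarrow> real"
  assumes "finite D" and "m \<in> D"
    and "\<And>j. j \<in> D \<Longrightarrow> j < m \<Longrightarrow> y j = a j" and "a m + 1 \<le> y m"
    and "\<And>j. j \<in> D \<Longrightarrow> 0 \<le> a j" and "\<And>j. j \<in> D \<Longrightarrow> 0 \<le> y j"
  shows "radix_gap a y D \<le> 0"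
  using assms
proof (induction D rule: finite_linorder_max_induct)
  case empty
  then show ?case by simp
next
  case (insert b D)
  show ?case
  proof (cases "b = m")
    case True
    then have "radix_gap a y D = 1" using insert by (intro radix_gap_eq_1) auto
    then show ?thesis using insert True by (simp add: radix_gap_insert_greatest)
  next
    case False
    then have "radix_gap a y D \<le> 0" using insert by auto
    moreover have "0 \<le> a b" "0 \<le> y b" using insert by auto
    ultimately have "(a b + 1) * radix_gap a y D \<le> 0" by (simp add: mult_nonneg_nonpos)
    moreover have "radix_gap a y (insert b D) = (a b + 1) * radix_gap a y D - y b"
      using insert by (simp add: radix_gap_insert_greatest)
    ultimately show ?thesis using \<open>0 \<le> y b\<close> by linarith
  qed
qed

lemma lexcut_diff:
  fixes xb x :: "real^'n::{finite,linorder}"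
  shows "(\<Sum>i\<in>{..k}. lexcut_coeff xb k i * x$i) - (\<Sum>i\<in>{..k}. lexcut_coeff xb k i * xb$i)
    = x$k - xb$k * radix_gap (($) xb) (($) x) {..<k}"
proof -
  have coeff: "lexcut_coeff xb k i = xb$k * (\<Prod>j\<in>{j\<in>{..<k}. i < j}. xb$j + 1)" if "i < k" for i
  proof -
    have "{j\<in>{..<k}. i < j} = {i<..<k}" by auto
    then show ?thesis using that by (simp add: lexcut_coeff_def)
  qed
  have "{..k} = insert k {..<k}" by auto
  then have "(\<Sum>i\<in>{..k}. lexcut_coeff xb k i * x$i) - (\<Sum>i\<in>{..k}. lexcut_coeff xb k i * xb$i)
      = (x$k - xb$k) + (\<Sum>i\<in>{..<k}. lexcut_coeff xb k i * (x$i - xb$i))"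
    by (simp add: lexcut_coeff_def sum_subtractf algebra_simps)
  also have "(\<Sum>i\<in>{..<k}. lexcut_coeff xb k i * (x$i - xb$i))
      = - (xb$k * (\<Sum>i\<in>{..<k}. (xb$i - x$i) * (\<Prod>j\<in>{j\<in>{..<k}. i < j}. xb$j + 1)))"
    unfolding sum_distrib_left sum_negf[symmetric] by (rule sum.cong) (simp_all add: coeff algebra_simps)
  finally show ?thesis by (simp add: radix_gap_def algebra_simps)
qed

lemma lexcut_iff:
  fixes xb x :: "real^'n::{finite,linorder}"
  shows "(\<Sum>i\<in>{..k}. lexcut_coeff xb k i * xb$i) \<le> (\<Sum>i\<in>{..k}. lexcut_coeff xb k i * x$i)
    \<longleftrightarrow> xb$k * radix_gap (($) xb) (($) x) {..<k} \<le> x$k"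
  using lexcut_diff[of xb k x] by linarith

lemma Ints_less_imp_add_1_le:
  fixes a b :: "'a::linordered_idom"
  assumes "a \<in> \<int>" and "b \<in> \<int>" and "a < b"
  shows "a + 1 \<le> b"
proof -
  obtain i j where ij: "a = of_int i" "b = of_int j" using assms(1,2) by (auto elim!: Ints_cases)
  with assms(3) have "i + 1 \<le> j" by simp
  then have "of_int (i + 1) \<le> (of_int j :: 'a)" by (simp only: of_int_le_iff)
  with ij show ?thesis by simp
qed

lemma lex_less_trans:
  fixes x y z :: "real^'n::{finite,linorder}"
  assumes "lex_less x y" and "lex_less y z"
  shows "lex_less x z"
proof -
  obtain i where i: "x$i < y$i" "\<forall>j<i. x$j = y$j"
    using assms(1) unfolding lex_less_def by blast
  obtain k where k: "y$k < z$k" "\<forall>j<k. y$j = z$j"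
    using assms(2) unfolding lex_less_def by blast
  have "\<exists>m. x$m < z$m \<and> (\<forall>j<m. x$j = z$j)"
  proof (cases i k rule: linorder_cases)
    case less
    then show ?thesis using i k by (intro exI[of _ i]) auto
  next
    case equal
    then show ?thesis using i k by (intro exI[of _ i]) auto
  next
    case greater
    then show ?thesis using i k by (intro exI[of _ k]) auto
  qed
  then show ?thesis unfolding lex_less_def by auto
qed

lemma lex_less_if_less_eq:
  fixes x y :: "real^'n::{finite,linorder}"
  assumes "\<And>i. x$i \<le> y$i" and "x \<noteq> y"
  shows "lex_less x y"
proof -
  let ?D = "{j. x$j \<noteq> y$j}"
  have "?D \<noteq> {}" using assms(2) by (auto simp: vec_eq_iff)
  then have "Min ?D \<in> ?D" by (intro Min_in) simp_all
  then have "x$(Min ?D) < y$(Min ?D)" using assms(1) order.not_eq_order_implies_strict by blast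
  moreover have "\<forall>j < Min ?D. x$j = y$j" using Min_le[of ?D] by (meson finite mem_Collect_eq not_le)
  ultimately show ?thesis using assms(2) unfolding lex_less_def by blast
qed

lemma lex_ge_if_less_eq:
  fixes x y b :: "real^'n::{finite,linorder}"
  assumes "lex_ge x b" and "\<And>i. x$i \<le> y$i"
  shows "lex_ge y b"
proof (cases "x = y")
  case False
  then have "lex_less x y" using assms(2) by (rule lex_less_if_less_eq[rotated])
  then show ?thesis using assms(1) lex_less_trans unfolding lex_ge_def by blast
qed (use assms in simp)

definition lex_lattice_points :: "real^'n::{finite,linorder} \<Rightarrow> (real^'n::{finite,linorder}) set" where
  "lex_lattice_points xb = {x \<in> nonneg_orthant. is_int_vec x \<and> lex_ge x xb}"

lemma Qset_nonneg_orthant: "Qset nonneg_orthant xb = convex hull lex_lattice_points xb"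
  unfolding Qset_def lex_lattice_points_def ..

lemma lex_lattice_points_add_axis:
  assumes "s \<in> lex_lattice_points xb"
  shows "s + real m *\<^sub>R axis i 1 \<in> lex_lattice_points xb"
proof -
  let ?t = "s + real m *\<^sub>R axis i 1"
  have le: "s$j \<le> ?t$j" for j by (simp add: axis_def)
  have "?t \<in> nonneg_orthant"
    using assms le unfolding lex_lattice_points_def nonneg_orthant_def by (auto intro: order_trans[OF _ le])
  moreover have "is_int_vec ?t"
    using assms unfolding lex_lattice_points_def is_int_vec_def by (simp add: axis_def)
  moreover have "lex_ge ?t xb"
    using assms le lex_ge_if_less_eq unfolding lex_lattice_points_def by blast
  ultimately show ?thesis unfolding lex_lattice_points_def by blast
qed

lemma lexcut_if_lex_lattice_point:
  fixes xb x :: "real^'n::{finite,linorder}"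
  assumes "xb \<in> nonneg_orthant" and "is_int_vec xb" and "x \<in> lex_lattice_points xb"
  shows "(\<Sum>i\<in>{..k}. lexcut_coeff xb k i * xb$i) \<le> (\<Sum>i\<in>{..k}. lexcut_coeff xb k i * x$i)"
proof -
  have xb_nonneg: "\<And>i. 0 \<le> xb$i" using assms(1) by (simp add: nonneg_orthant_def)
  have x_nonneg: "\<And>i. 0 \<le> x$i" and "is_int_vec x" and "lex_ge x xb"
    using assms(3) by (simp_all add: lex_lattice_points_def nonneg_orthant_def)
  show ?thesis unfolding lexcut_iff
  proof (cases "x = xb")
    case True
    then show "xb$k * radix_gap (($) xb) (($) x) {..<k} \<le> x$k" by (simp add: radix_gap_eq_1)
  next
    case False
    then obtain m where less: "xb$m < x$m" and agree: "\<forall>j<m. xb$j = x$j"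
      using \<open>lex_ge x xb\<close> unfolding lex_ge_def lex_less_def by auto
    show "xb$k * radix_gap (($) xb) (($) x) {..<k} \<le> x$k"
    proof (cases "k \<le> m")
      case True
      then have "radix_gap (($) xb) (($) x) {..<k} = 1" using agree by (intro radix_gap_eq_1) auto
      moreover have "xb$k \<le> x$k" using True agree less by (cases "k = m") auto
      ultimately show ?thesis by simp
    next
      case False
      have "xb$m + 1 \<le> x$m"
        using Ints_less_imp_add_1_le less assms(2) \<open>is_int_vec x\<close> by (auto simp: is_int_vec_def)
      then have "radix_gap (($) xb) (($) x) {..<k} \<le> 0"
        using False agree xb_nonneg x_nonneg by (intro radix_gap_nonpos[of _ m]) auto
      then show ?thesis using xb_nonneg[of k] x_nonneg[of k] by (meson mult_nonneg_nonpos order_trans)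
    qed
  qed
qed

lemma sum_telescope_downset:
  fixes f :: "'n::{finite,linorder} set \<Rightarrow> 'a::ab_group_add"
  assumes "\<And>d j. d \<in> D \<Longrightarrow> j < d \<Longrightarrow> j \<in> D"
  shows "(\<Sum>k\<in>D. f {..<k} - f {..k}) = f {} - f D"
  using finite[of D] assms
proof (induction D rule: finite_linorder_max_induct)
  case empty
  then show ?case by simp
next
  case (insert b D)
  have "D = {..<b}"
    using insert.hyps(2) insert.prems[of b] by (auto simp: less_imp_neq)
  moreover have "{..b} = insert b {..<b}" by auto
  ultimately show ?case using insert.IH by (simp add: \<open>D = {..<b}\<close>)
qed

lemma convex_linear_halfspace_ge: "convex {x::real^'n. c \<le> (\<Sum>i\<in>I. f i * x$i)}"
proof -
  have "(\<Sum>i\<in>I. f i * x$i) = inner (\<chi> i. if i \<in> I then f i else 0) x" for x :: "real^'n"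
    by (simp add: inner_vec_def if_distrib[of "\<lambda>a. a * _"] sum.If_cases Int_absorb1 cong: if_cong)
  then show ?thesis using convex_halfspace_ge[of c "\<chi> i. if i \<in> I then f i else 0"] by simp
qed

lemma convex_scaleR_add_sum_mem:
  fixes C :: "'a::real_vector set"
  assumes "convex C" and "finite K" and "p \<in> C" and "\<And>k. k \<in> K \<Longrightarrow> v k \<in> C"
    and "0 \<le> l" and "\<And>k. k \<in> K \<Longrightarrow> 0 \<le> c k" and "l + sum c K = 1"
  shows "l *\<^sub>R p + (\<Sum>k\<in>K. c k *\<^sub>R v k) \<in> C"
proof -
  let ?u = "case_option l c" and ?y = "case_option p v"
  have "(\<Sum>j\<in>insert None (Some ` K). ?u j *\<^sub>R ?y j) \<in> C"
    by (rule convex_sum) (use assms in \<open>auto simp: sum.reindex\<close>)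
  then show ?thesis using assms(2) by (simp add: sum.reindex)
qed

lemma convex_hull_add_nonneg_multiple:
  fixes S :: "'a::real_vector set"
  assumes closed: "\<And>s m. s \<in> S \<Longrightarrow> s + real m *\<^sub>R e \<in> S"
    and p: "p \<in> convex hull S" and "0 \<le> t"
  shows "p + t *\<^sub>R e \<in> convex hull S"
proof (cases "t = 0")
  case False
  define m where "m = nat \<lceil>t\<rceil>"
  have "t \<le> real m" and "0 < real m" using \<open>0 \<le> t\<close> False by (auto simp: m_def)
  have "real m *\<^sub>R e + p \<in> (\<lambda>s. real m *\<^sub>R e + s) ` (convex hull S)" using p by blast
  also have "\<dots> = convex hull ((\<lambda>s. real m *\<^sub>R e + s) ` S)"
    by (rule convex_hull_translation[symmetric])
  also have "\<dots> \<subseteq> convex hull S"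
    by (rule hull_mono) (use closed in \<open>auto simp: add.commute\<close>)
  finally have q: "p + real m *\<^sub>R e \<in> convex hull S" by (simp add: add.commute)
  have "(1 - t / m) *\<^sub>R p + (t / m) *\<^sub>R (p + real m *\<^sub>R e) \<in> convex hull S"
    using \<open>0 \<le> t\<close> \<open>t \<le> real m\<close> \<open>0 < real m\<close>
    by (intro convexD_alt[OF convex_convex_hull p q]) (simp_all add: divide_le_eq_1)
  moreover have "(1 - t / m) *\<^sub>R p + (t / m) *\<^sub>R (p + real m *\<^sub>R e) = p + t *\<^sub>R e"
    using \<open>0 < real m\<close> by (simp add: algebra_simps)
  ultimately show ?thesis by simp
qed (use p in simp)

lemma convex_hull_add_nonneg:
  fixes S :: "(real^'n) set"
  assumes closed: "\<And>s i m. s \<in> S \<Longrightarrow> s + real m *\<^sub>R axis i 1 \<in> S"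
    and p: "p \<in> convex hull S" and w: "\<And>i. 0 \<le> w$i"
  shows "p + w \<in> convex hull S"
proof -
  have "p + (\<Sum>i\<in>F. w$i *\<^sub>R axis i 1) \<in> convex hull S" if "finite F" for F
    using that
  proof (induction F rule: finite_induct)
    case empty
    then show ?case using p by simp
  next
    case (insert j F)
    then show ?case
      using convex_hull_add_nonneg_multiple[OF closed insert.IH w] by (simp add: algebra_simps)
  qed
  from this[of UNIV] show ?thesis using basis_expansion[of w] by (simp add: scalar_mult_eq_scaleR)
qed

lemma max_0_clipped_step:
  fixes a y g :: real
  assumes "0 \<le> a" and "0 \<le> y" and "a * g \<le> y"
  shows "max 0 ((a + 1) * g - y) \<le> max 0 g"
    and "(a + 1) * max 0 g - max 0 ((a + 1) * g - y) \<le> y"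
proof -
  show "max 0 ((a + 1) * g - y) \<le> max 0 g"
  proof (cases "g \<le> 0")
    case True
    then have "(a + 1) * g \<le> 0" using assms(1) by (simp add: mult_nonneg_nonpos)
    then show ?thesis using assms(2) by simp
  qed (use assms(3) in \<open>simp add: algebra_simps\<close>)
  show "(a + 1) * max 0 g - max 0 ((a + 1) * g - y) \<le> y"
    using assms(2) by (cases "g \<le> 0") simp_all
qed

lemma lexcut_point_in_Qset:
  fixes xb x :: "real^'n::{finite,linorder}"
  assumes xb: "xb \<in> nonneg_orthant" "is_int_vec xb"
    and x_nonneg: "\<And>i. 0 \<le> x$i"
    and cuts: "\<And>k. xb$k * radix_gap (($) xb) (($) x) {..<k} \<le> x$k"
  shows "x \<in> Qset nonneg_orthant xb"
proof -
  define mu where "mu D = max 0 (radix_gap (($) xb) (($) x) D)" for D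
  define lam where "lam k = mu {..<k} - mu {..k}" for k
  define v where "v k = (\<chi> i. if i < k then xb$i else if i = k then xb$i + 1 else 0)" for k
  define z where "z = mu UNIV *\<^sub>R xb + (\<Sum>k\<in>UNIV. lam k *\<^sub>R v k)"
  have xb_nonneg: "\<And>i. 0 \<le> xb$i" using xb(1) by (simp add: nonneg_orthant_def)
  have mu_step: "mu {..k} \<le> mu {..<k}" "(xb$k + 1) * mu {..<k} - mu {..k} \<le> x$k" for k
    using max_0_clipped_step[OF xb_nonneg x_nonneg cuts] by (simp_all add: mu_def radix_gap_atMost)
  have sum_lam: "sum lam D = 1 - mu D" if "\<And>d j. d \<in> D \<Longrightarrow> j < d \<Longrightarrow> j \<in> D" for D
    using sum_telescope_downset[where f = mu, OF that] by (simp add: lam_def mu_def)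
  have v_mem: "v k \<in> lex_lattice_points xb" for k
  proof -
    have "xb$k < v k $ k" and "\<forall>j<k. xb$j = v k $ j" by (simp_all add: v_def)
    then have "lex_less xb (v k)" unfolding lex_less_def by fastforce
    moreover have "v k \<in> nonneg_orthant" and "is_int_vec (v k)"
      using xb_nonneg xb(2) by (simp_all add: v_def nonneg_orthant_def is_int_vec_def)
    ultimately show ?thesis by (simp add: lex_lattice_points_def lex_ge_def)
  qed
  have "z \<in> convex hull lex_lattice_points xb"
    unfolding z_def
  proof (rule convex_scaleR_add_sum_mem)
    show "xb \<in> convex hull lex_lattice_points xb"
      using xb by (intro hull_inc) (simp add: lex_lattice_points_def lex_ge_def)
    show "v k \<in> convex hull lex_lattice_points xb" for k
      using v_mem by (intro hull_inc)
    show "0 \<le> lam k" for k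
      using mu_step(1) by (simp add: lam_def)
    show "mu UNIV + sum lam UNIV = 1"
      using sum_lam[of UNIV] by simp
  qed (simp_all add: mu_def)
  moreover have "z$i \<le> x$i" for i
  proof -
    have "{i<..} = UNIV - {..i}" by auto
    then have tail: "(\<Sum>k\<in>{i<..}. lam k) = mu {..i} - mu UNIV"
      using sum_lam[of UNIV] sum_lam[of "{..i}"] by (simp add: sum_diff)
    have "lam k * v k $ i
        = (if k \<in> {i<..} then lam k * xb$i else 0) + (if k = i then lam k * (xb$i + 1) else 0)" for k
      by (auto simp: v_def)
    then have "z$i = mu UNIV * xb$i + (\<Sum>k\<in>{i<..}. lam k) * xb$i + lam i * (xb$i + 1)"
      by (simp add: z_def sum_component sum.distrib sum.If_cases sum_distrib_right greaterThan_def)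
    also have "\<dots> = (xb$i + 1) * mu {..<i} - mu {..i}"
      unfolding tail by (simp add: lam_def algebra_simps)
    finally show ?thesis using mu_step(2) by simp
  qed
  ultimately have "z + (x - z) \<in> convex hull lex_lattice_points xb"
    by (intro convex_hull_add_nonneg lex_lattice_points_add_axis) auto
  then show ?thesis by (simp add: Qset_nonneg_orthant)
qed

theorem theorem1:
  fixes xb :: "real^'n::{finite,linorder}"
  assumes "xb \<in> nonneg_orthant" and "is_int_vec xb" and "xb \<noteq> 0"
  shows "Qset nonneg_orthant xb =
    {x. (\<forall>i. 0 \<le> x$i) \<and>
        (\<forall>k. (\<Sum>i\<in>{..k}. lexcut_coeff xb k i * x$i) \<ge> (\<Sum>i\<in>{..k}. lexcut_coeff xb k i * xb$i))}"
    (is "_ = ?P")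
proof
  have "?P = (\<Inter>i. {x. 0 \<le> (\<Sum>j\<in>{i}. 1 * x$j)}) \<inter>
      (\<Inter>k. {x. (\<Sum>i\<in>{..k}. lexcut_coeff xb k i * xb$i) \<le> (\<Sum>i\<in>{..k}. lexcut_coeff xb k i * x$i)})"
    by auto
  then have "convex ?P" by (simp only:) (intro convex_Int convex_INT convex_linear_halfspace_ge)
  moreover have "lex_lattice_points xb \<subseteq> ?P"
    using lexcut_if_lex_lattice_point[OF assms(1,2)]
    by (auto simp: lex_lattice_points_def nonneg_orthant_def)
  ultimately show "Qset nonneg_orthant xb \<subseteq> ?P"
    unfolding Qset_nonneg_orthant by (rule hull_minimal[rotated])
  show "?P \<subseteq> Qset nonneg_orthant xb"
    using lexcut_point_in_Qset[OF assms(1,2)] by (auto simp: lexcut_iff)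
qed

end
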